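(* Let $i\ge 7$ be an odd integer such that $(i+1)/2$ is even. Then for every $t\in\{1,\dots,\tfrac{i-3}{4}\}$, \[S(i)=\left\langle 2,\tfrac{i+1}{2}+2t+1\right\rangle\cap\bigcap_{k=t}^{(i-3)/4}T\!\left(\tfrac{i+1}{2}+2k+1\right),\] and this intersection is a factorization of $S(i)$ into irreducible numerical semigroups (i.e. it cannot be refined).
   Context: $\mathbb{N}$ denotes the non-negative integers. A numerical semigroup is a submonoid of $(\mathbb{N},+)$ with finite complement. A numerical semigroup is irreducible if it cannot be written as the intersection of two numerical semigroups properly containing it. $\langle a,b\rangle=\{xa+yb:x,y\in\mathbb{N}\}$; for $b$ odd, $\langle 2,b\rangle$ is irreducible. For an odd integer $j\ge 3$, $T(j)=\{0,\tfrac{j+1}{2},\tfrac{j+1}{2}+1,\dots,j-1\}\cup\{n\in\mathbb{Z}:n\ge j+1\}$; each $T(j)$ is an irreducible numerical semigroup. For odd $i\ge5$, $S(i)=\langle 2,i\rangle\cap T(i)$. Given a numerical semigroup $S$ and irreducible numerical semigroups $S_1,\dots,S_n$, the expression $S_1\cap\dots\cap S_n$ is a factorization of $S$ (of length $n$) if $S=S_1\cap\dots\cap S_n$ and $S\neq\bigcap_{j\in J}S_j$ for every nonempty proper subset $J\subsetneq\{1,\dots,n\}$. *)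

theory Defs
  imports Main
begin

definition numerical_semigroup :: "nat set \<Rightarrow> bool" where
  "numerical_semigroup S \<longleftrightarrow> 0 \<in> S \<and> (\<forall>x\<in>S. \<forall>y\<in>S. x + y \<in> S) \<and> finite (UNIV - S)"

definition irreducible_ns :: "nat set \<Rightarrow> bool" where
  "irreducible_ns S \<longleftrightarrow> numerical_semigroup S \<and>
     \<not> (\<exists>A B. numerical_semigroup A \<and> numerical_semigroup B \<and> S \<subset> A \<and> S \<subset> B \<and> S = A \<inter> B)"

definition gen2 :: "nat \<Rightarrow> nat \<Rightarrow> nat set" where
  "gen2 a b = {x * a + y * b | x y. True}"

definition T :: "nat \<Rightarrow> nat set" where
  "T j = {0} \<union> {(j + 1) div 2 ..< j} \<union> {j + 1 ..}"

definition S :: "nat \<Rightarrow> nat set" where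
  "S i = gen2 2 i \<inter> T i"

definition is_factorization :: "nat set \<Rightarrow> nat set list \<Rightarrow> bool" where
  "is_factorization X Ss \<longleftrightarrow> Ss \<noteq> [] \<and> (\<forall>j<length Ss. irreducible_ns (Ss ! j)) \<and>
     X = (\<Inter>j\<in>{..<length Ss}. Ss ! j) \<and>
     (\<forall>J. J \<noteq> {} \<and> J \<subset> {..<length Ss} \<longrightarrow> X \<noteq> (\<Inter>j\<in>J. Ss ! j))"

end

theory Submission
  imports Defs
begin

text \<open>Since (i + 1)/2 is even, i = 4m + 3, and S(i) consists of 0, the even numbers
  from 2m + 2 on and all numbers above 4m + 3; its odd gaps beyond 2m + 1 are
  2m + 3, 2m + 5, ..., 4m + 3. The factor \<langle>2, 2m + 2t + 3\<rangle> removes the odd gaps below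
  2m + 2t + 3, and T(2m + 2k + 3) removes exactly the gap 2m + 2k + 3 among the
  numbers above m + k + 1. No factor can be dropped, because each one alone excludes a
  particular odd gap: 2m + 3 for \<langle>2, 2m + 2t + 3\<rangle> (here t \<ge> 1 is used) and
  2m + 2k + 3 for T(2m + 2k + 3).\<close>

lemma mem_gen2_two_odd:
  assumes "odd b"
  shows "x \<in> gen2 2 b \<longleftrightarrow> even x \<or> b \<le> x"
proof
  assume "x \<in> gen2 2 b"
  then obtain u v where "x = u * 2 + v * b"
    unfolding gen2_def by blast
  then show "even x \<or> b \<le> x"
    by (cases v) auto
next
  assume "even x \<or> b \<le> x"
  then have "x = (x div 2) * 2 + 0 * b \<or> x = ((x - b) div 2) * 2 + 1 * b"
    using assms by (cases "even x") auto
  then show "x \<in> gen2 2 b"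
    unfolding gen2_def by blast
qed

lemma mem_T: "x \<in> T j \<longleftrightarrow> x = 0 \<or> ((j + 1) div 2 \<le> x \<and> x \<noteq> j)"
  unfolding T_def by auto

lemma mem_S:
  assumes "odd i"
  shows "x \<in> S i \<longleftrightarrow> x = 0 \<or> (even x \<and> (i + 1) div 2 \<le> x) \<or> i < x"
  unfolding S_def Int_iff mem_gen2_two_odd[OF assms] mem_T using assms by auto

lemma irreducible_nsI:
  assumes "numerical_semigroup X" and "g \<notin> X"
    and "\<And>A. numerical_semigroup A \<Longrightarrow> X \<subset> A \<Longrightarrow> g \<in> A"
  shows "irreducible_ns X"
  unfolding irreducible_ns_def using assms by blast

lemma numerical_semigroup_gen2_two_odd:
  assumes "odd b"
  shows "numerical_semigroup (gen2 2 b)"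
proof -
  have "finite (UNIV - gen2 2 b)"
    by (rule finite_subset[of _ "{..<b}"]) (auto simp: mem_gen2_two_odd[OF assms])
  then show ?thesis
    unfolding numerical_semigroup_def by (auto simp: mem_gen2_two_odd[OF assms])
qed

lemma numerical_semigroup_T:
  assumes "odd j"
  shows "numerical_semigroup (T j)"
proof -
  have "finite (UNIV - T j)"
    by (rule finite_subset[of _ "{..j}"]) (auto simp: mem_T)
  moreover have "x + y \<in> T j" if "x \<in> T j" and "y \<in> T j" for x y
    using that assms by (auto simp: mem_T elim!: oddE)
  ultimately show ?thesis
    unfolding numerical_semigroup_def by (simp add: mem_T)
qed

text \<open>In both cases the Frobenius number g lies in every proper over-semigroup: any new
  element x is a gap with g - x already in the semigroup.\<close>

lemma irreducible_gen2_two_odd: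
  assumes "odd b" and "3 \<le> b"
  shows "irreducible_ns (gen2 2 b)"
proof (rule irreducible_nsI[OF numerical_semigroup_gen2_two_odd[OF assms(1)], of "b - 2"])
  show "b - 2 \<notin> gen2 2 b"
    using assms by (simp add: mem_gen2_two_odd)
  fix A assume A: "numerical_semigroup A" "gen2 2 b \<subset> A"
  then obtain x where x: "x \<in> A" "x \<notin> gen2 2 b"
    by blast
  then have "odd x" "x < b"
    by (auto simp: mem_gen2_two_odd[OF assms(1)])
  then have "x \<le> b - 2" "even (b - 2 - x)"
    using assms by presburger+
  then have "b - 2 - x \<in> gen2 2 b"
    using assms by (simp add: mem_gen2_two_odd)
  then have "b - 2 - x \<in> A"
    using A by blast
  with x A have "x + (b - 2 - x) \<in> A"
    unfolding numerical_semigroup_def by blast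
  with \<open>x \<le> b - 2\<close> show "b - 2 \<in> A"
    by (metis le_add_diff_inverse)
qed

lemma irreducible_T:
  assumes "odd j"
  shows "irreducible_ns (T j)"
proof (rule irreducible_nsI[OF numerical_semigroup_T[OF assms], of j])
  show "j \<notin> T j"
    using assms by (simp add: mem_T odd_pos)
  fix A assume A: "numerical_semigroup A" "T j \<subset> A"
  then obtain x where x: "x \<in> A" "x \<notin> T j"
    by blast
  show "j \<in> A"
  proof (cases "x = j")
    case False
    with x have "0 < x" "x < (j + 1) div 2"
      by (auto simp: mem_T)
    then have "j - x \<in> T j"
      using assms by (auto simp: mem_T elim!: oddE)
    then have "j - x \<in> A"
      using A by blast
    with x A have "x + (j - x) \<in> A"
      unfolding numerical_semigroup_def by blast
    with \<open>x < (j + 1) div 2\<close> show ?thesis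
      by simp
  qed (use x in simp)
qed

lemma is_factorizationI:
  assumes "Ss \<noteq> []" and "distinct Ss" and "\<forall>A\<in>set Ss. irreducible_ns A" and "X = \<Inter>(set Ss)"
    and witness: "\<And>A. A \<in> set Ss \<Longrightarrow> \<exists>w. w \<notin> X \<and> (\<forall>B\<in>set Ss - {A}. w \<in> B)"
  shows "is_factorization X Ss"
  unfolding is_factorization_def
proof (intro conjI allI impI)
  show "X = (\<Inter>j\<in>{..<length Ss}. Ss ! j)"
    using assms(4) by (simp add: set_conv_nth) blast
  fix J assume J: "J \<noteq> {} \<and> J \<subset> {..<length Ss}"
  then obtain j where j: "j < length Ss" "j \<notin> J"
    by blast
  then obtain w where w: "w \<notin> X" "\<forall>B\<in>set Ss - {Ss ! j}. w \<in> B"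
    using witness nth_mem by blast
  have "w \<in> Ss ! k" if "k \<in> J" for k
  proof -
    have "k < length Ss" "k \<noteq> j"
      using J j that by auto
    then show ?thesis
      using w(2) j(1) assms(2) by (simp add: nth_eq_iff_index_eq)
  qed
  with w(1) show "X \<noteq> (\<Inter>j\<in>J. Ss ! j)"
    by blast
qed (use assms in auto)

lemma mem_S_4m3: "x \<in> S (4 * m + 3) \<longleftrightarrow> x = 0 \<or> (even x \<and> 2 * m + 2 \<le> x) \<or> 4 * m + 3 < x"
  by (subst mem_S) simp_all

lemma mem_T_odd_shift: "x \<in> T (2 * m + 2 * k + 3) \<longleftrightarrow> x = 0 \<or> (m + k + 1 < x \<and> x \<noteq> 2 * m + 2 * k + 3)"
  unfolding mem_T by auto

lemma S_eq_gen2_Int_T: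
  assumes "t \<le> m"
  shows "S (4 * m + 3) = gen2 2 (2 * m + 2 * t + 3) \<inter> (\<Inter>k\<in>{t..m}. T (2 * m + 2 * k + 3))"
    (is "_ = ?G \<inter> ?Ts")
proof (intro equalityI subsetI)
  fix x assume "x \<in> S (4 * m + 3)"
  then show "x \<in> ?G \<inter> ?Ts"
    using assms by (auto simp: mem_S_4m3 mem_gen2_two_odd mem_T_odd_shift)
next
  fix x assume x: "x \<in> ?G \<inter> ?Ts"
  show "x \<in> S (4 * m + 3)"
  proof (rule ccontr)
    assume "x \<notin> S (4 * m + 3)"
    moreover have "x \<in> T (2 * m + 2 * m + 3)"
      using x assms atLeastAtMost_iff order_refl by blast
    then have "x = 0 \<or> (m + m + 1 < x \<and> x \<noteq> 2 * m + 2 * m + 3)"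
      by (simp only: mem_T_odd_shift)
    ultimately have "odd x" "x < 4 * m + 3"
      by (auto simp: mem_S_4m3)
    moreover have "2 * m + 2 * t + 3 \<le> x"
      using x \<open>odd x\<close> by (simp add: mem_gen2_two_odd)
    moreover obtain q where "x = 2 * q + 1"
      using \<open>odd x\<close> by (rule oddE)
    ultimately have "x = 2 * m + 2 * (q - m - 1) + 3" "q - m - 1 \<in> {t..m}"
      by auto
    then have "x \<in> T (2 * m + 2 * (q - m - 1) + 3)" "x = 2 * m + 2 * (q - m - 1) + 3"
      using x by blast+
    then show False
      by (simp only: mem_T_odd_shift) simp
  qed
qed

lemma gap_mem_T_shift_iff:
  assumes "k' \<le> m"
  shows "2 * m + 2 * k + 3 \<in> T (2 * m + 2 * k' + 3) \<longleftrightarrow> k \<noteq> k'"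
  using assms by (auto simp: mem_T_odd_shift)

lemma odd_gap_notin_S_4m3:
  assumes "odd w" and "w \<le> 4 * m + 3"
  shows "w \<notin> S (4 * m + 3)"
  using assms by (auto simp: mem_S_4m3 odd_pos)

lemma is_factorization_S_4m3:
  assumes "1 \<le> t" and "t \<le> m"
  shows "is_factorization (S (4 * m + 3))
           (gen2 2 (2 * m + 2 * t + 3) # map (\<lambda>k. T (2 * m + 2 * k + 3)) [t..<m + 1])"
    (is "is_factorization _ (?G # map ?T _)")
proof (rule is_factorizationI)
  have set_eq: "set (?G # map ?T [t..<m + 1]) = insert ?G (?T ` {t..m})"
    by auto
  have G_gap: "2 * m + 3 \<notin> ?G"
    using assms(1) by (simp add: mem_gen2_two_odd)
  have T_gap: "2 * m + 3 \<in> ?T k" if "k \<in> {t..m}" for k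
    using gap_mem_T_shift_iff[of k m 0] that assms(1) by simp
  have "inj_on ?T (set [t..<m + 1])"
    by (rule inj_onI) (metis gap_mem_T_shift_iff set_upt atLeastLessThan_iff Suc_eq_plus1 less_Suc_eq_le)
  moreover have "?G \<notin> set (map ?T [t..<m + 1])"
    using G_gap T_gap by auto
  ultimately show "distinct (?G # map ?T [t..<m + 1])"
    by (simp only: distinct.simps distinct_map distinct_upt) simp
  show "\<forall>A\<in>set (?G # map ?T [t..<m + 1]). irreducible_ns A"
    by (auto intro: irreducible_gen2_two_odd irreducible_T)
  show "S (4 * m + 3) = \<Inter>(set (?G # map ?T [t..<m + 1]))"
    unfolding set_eq S_eq_gen2_Int_T[OF assms(2)] by simp
  fix A assume "A \<in> set (?G # map ?T [t..<m + 1])"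
  then consider "A = ?G" | k where "k \<in> {t..m}" "A = ?T k"
    unfolding set_eq by blast
  then show "\<exists>w. w \<notin> S (4 * m + 3) \<and> (\<forall>B\<in>set (?G # map ?T [t..<m + 1]) - {A}. w \<in> B)"
  proof cases
    case 1
    then show ?thesis
      using odd_gap_notin_S_4m3[of "2 * m + 3" m] T_gap unfolding set_eq by auto
  next
    case (2 k)
    have "2 * m + 2 * k + 3 \<in> ?G"
      using 2(1) by (simp add: mem_gen2_two_odd)
    moreover have "2 * m + 2 * k + 3 \<in> ?T k'" if "k' \<in> {t..m}" "?T k' \<noteq> ?T k" for k'
      using that gap_mem_T_shift_iff[of k' m k] by auto
    moreover have "2 * m + 2 * k + 3 \<notin> S (4 * m + 3)"
      using 2(1) by (intro odd_gap_notin_S_4m3) auto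
    ultimately show ?thesis
      using 2(2) unfolding set_eq by blast
  qed
qed simp

theorem lemma2p3:
  fixes i t :: nat
  assumes "odd i" and "i \<ge> 7" and "even ((i + 1) div 2)"
    and "1 \<le> t" and "t \<le> (i - 3) div 4"
  shows "S i = gen2 2 ((i + 1) div 2 + 2 * t + 1) \<inter>
               (\<Inter>k\<in>{t..(i - 3) div 4}. T ((i + 1) div 2 + 2 * k + 1))
       \<and> is_factorization (S i)
           (gen2 2 ((i + 1) div 2 + 2 * t + 1) #
            map (\<lambda>k. T ((i + 1) div 2 + 2 * k + 1)) [t..<(i - 3) div 4 + 1])"
proof -
  define m where "m = (i - 3) div 4"
  have i: "i = 4 * m + 3"
    unfolding m_def using assms(1,3) by presburger
  have shift: "(i + 1) div 2 + 2 * k + 1 = 2 * m + 2 * k + 3" for k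
    using i by simp
  have "t \<le> m"
    using assms(5) unfolding m_def .
  then show ?thesis
    unfolding shift m_def[symmetric] unfolding i
    using S_eq_gen2_Int_T is_factorization_S_4m3 assms(4) by blast
qed

end
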